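(* For every integer $m\ge 4$, the commuting graph $\Gamma(H_m)$ of the group $H_m$ defined below is connected.
   Context: For an integer $m\ge 3$, let $V_m$ and $W_m$ be vector spaces over $\mathrm{GF}(2)$ of dimensions $m$ and $m-2$, with ordered bases $x_1,\dots,x_m$ and $y_1,\dots,y_{m-2}$ respectively. Let $f_m:V_m\times V_m\to W_m$ be the bilinear map determined on basis vectors by $f_m(x_i,x_j)=0$ if $j\in\{i,i+1\}$, $f_m(x_i,x_j)=y_{j-i-1}$ if $i+2\le j\le m$, and $f_m(x_i,x_j)=0$ if $i>j$. The group $H_m$ has underlying set $V_m\times W_m$ with multiplication $(a,b)\cdot(c,d)=(a+c,\ f_m(a,c)+b+d)$. For a group $G$, the commuting graph $\Gamma(G)$ is the graph whose vertices are the non-central elements of $G$, two distinct vertices being adjacent if and only if they commute in $G$. *)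

theory Defs
  imports "HOL-Library.Z2" "HOL-Algebra.Group"
begin

text \<open>V_m: coordinates supported in {1..m} (coefficients of x_1..x_m);
  W_m: coordinates supported in {1..m-2} (coefficients of y_1..y_(m-2)).\<close>

definition Vsp :: "nat \<Rightarrow> (nat \<Rightarrow> bit) set" where
  "Vsp m = {a. \<forall>i. a i \<noteq> 0 \<longrightarrow> i \<in> {1..m}}"

definition Wsp :: "nat \<Rightarrow> (nat \<Rightarrow> bit) set" where
  "Wsp m = {b. \<forall>k. b k \<noteq> 0 \<longrightarrow> k \<in> {1..m-2}}"

definition vadd :: "(nat \<Rightarrow> bit) \<Rightarrow> (nat \<Rightarrow> bit) \<Rightarrow> (nat \<Rightarrow> bit)" where
  "vadd a c = (\<lambda>i. a i + c i)"

definition ybasis :: "nat \<Rightarrow> (nat \<Rightarrow> bit)" where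
  "ybasis k = (\<lambda>l. if l = k then 1 else 0)"

definition fbasis :: "nat \<Rightarrow> nat \<Rightarrow> nat \<Rightarrow> (nat \<Rightarrow> bit)" where
  "fbasis m i j = (if i + 2 \<le> j \<and> j \<le> m then ybasis (j - i - 1) else (\<lambda>_. 0))"

definition fm :: "nat \<Rightarrow> (nat \<Rightarrow> bit) \<Rightarrow> (nat \<Rightarrow> bit) \<Rightarrow> (nat \<Rightarrow> bit)" where
  "fm m a c = (\<lambda>k. \<Sum>i\<in>{1..m}. \<Sum>j\<in>{1..m}. a i * c j * fbasis m i j k)"

definition Hgrp :: "nat \<Rightarrow> ((nat \<Rightarrow> bit) \<times> (nat \<Rightarrow> bit)) monoid" where
  "Hgrp m = \<lparr> carrier = Vsp m \<times> Wsp m,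
             mult = (\<lambda>(a, b) (c, d). (vadd a c, vadd (vadd (fm m a c) b) d)),
             one = ((\<lambda>_. 0), (\<lambda>_. 0)) \<rparr>"

definition grp_center :: "('a, 'b) monoid_scheme \<Rightarrow> 'a set" where
  "grp_center G = {z \<in> carrier G. \<forall>g \<in> carrier G. z \<otimes>\<^bsub>G\<^esub> g = g \<otimes>\<^bsub>G\<^esub> z}"

definition cg_vertices :: "('a, 'b) monoid_scheme \<Rightarrow> 'a set" where
  "cg_vertices G = carrier G - grp_center G"

definition cg_adj :: "('a, 'b) monoid_scheme \<Rightarrow> 'a \<Rightarrow> 'a \<Rightarrow> bool" where
  "cg_adj G x y \<longleftrightarrow> x \<in> cg_vertices G \<and> y \<in> cg_vertices G \<and> x \<noteq> y
                    \<and> x \<otimes>\<^bsub>G\<^esub> y = y \<otimes>\<^bsub>G\<^esub> x"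

definition graph_connected :: "'a set \<Rightarrow> ('a \<Rightarrow> 'a \<Rightarrow> bool) \<Rightarrow> bool" where
  "graph_connected Vs E \<longleftrightarrow> Vs \<noteq> {} \<and> (\<forall>u\<in>Vs. \<forall>v\<in>Vs. E\<^sup>*\<^sup>* u v)"

end

theory Submission
  imports Defs
begin

text \<open>Two elements (a,b), (c,d) of H_m commute iff f_m(a,c) = f_m(c,a), so for m \<ge> 4 the
  non-central elements are exactly those with a \<noteq> 0, and (a,b) is adjacent to (a,0).
  It therefore suffices to join every (a,0) with a \<noteq> 0 supported on x_1..x_h to (x_1,0),
  by induction on h. For h \<le> 2 the element commutes with x_1. Otherwise the linear map
  c \<mapsto> f_m(a,c) + f_m(c,a) sends the 2^(h-1) vectors supported on x_1..x_(h-1) into the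
  2^(h-2) vectors supported on y_1..y_(h-2), so it has a nonzero kernel element d, which
  commutes with a and is supported on x_1..x_(h-1).\<close>

declare add_bit_eq_xor[simp del] mult_bit_eq_and[simp del]

lemma bit_add_eq_0_iff: "(x::bit) + y = 0 \<longleftrightarrow> x = y"
  by (cases x; cases y) (simp_all add: add_bit_eq_xor)

lemma Hgrp_carrier: "carrier (Hgrp m) = Vsp m \<times> Wsp m"
  by (simp add: Hgrp_def)

lemma Hgrp_mult: "(a, b) \<otimes>\<^bsub>Hgrp m\<^esub> (c, d) = (vadd a c, vadd (vadd (fm m a c) b) d)"
  by (simp add: Hgrp_def)

lemma Hgrp_commute_iff:
  "(a, b) \<otimes>\<^bsub>Hgrp m\<^esub> (c, d) = (c, d) \<otimes>\<^bsub>Hgrp m\<^esub> (a, b) \<longleftrightarrow> fm m a c = fm m c a"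
  by (auto simp add: Hgrp_mult vadd_def fun_eq_iff add.commute add.left_commute)

lemma fm_zero_left: "fm m (\<lambda>_. 0) c = (\<lambda>_. 0)"
  by (simp add: fm_def)

lemma fm_zero_right: "fm m a (\<lambda>_. 0) = (\<lambda>_. 0)"
  by (simp add: fm_def)

lemma fm_vadd_left: "fm m (vadd a a') c = vadd (fm m a c) (fm m a' c)"
  by (simp add: fm_def vadd_def fun_eq_iff distrib_left distrib_right sum.distrib)

lemma fm_vadd_right: "fm m a (vadd c c') = vadd (fm m a c) (fm m a c')"
  by (simp add: fm_def vadd_def fun_eq_iff distrib_left distrib_right sum.distrib)

text \<open>ybasis i, the indicator of coordinate i, also serves as the basis vector x_i of V_m.\<close>

lemma fm_ybasis_left:
  assumes "p \<in> {1..m}"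
  shows "fm m (ybasis p) c k = (\<Sum>j\<in>{1..m}. c j * fbasis m p j k)"
proof -
  have "fm m (ybasis p) c k
      = (\<Sum>i\<in>{1..m}. if i = p then (\<Sum>j\<in>{1..m}. c j * fbasis m p j k) else 0)"
    unfolding fm_def ybasis_def by (intro sum.cong) auto
  then show ?thesis
    using assms by (simp only: sum.delta finite_atLeastAtMost) simp
qed

lemma fm_ybasis_right:
  assumes "q \<in> {1..m}"
  shows "fm m a (ybasis q) k = (\<Sum>i\<in>{1..m}. a i * fbasis m i q k)"
proof -
  have "fm m a (ybasis q) k
      = (\<Sum>i\<in>{1..m}. \<Sum>j\<in>{1..m}. if j = q then a i * fbasis m i q k else 0)"
    unfolding fm_def ybasis_def by (intro sum.cong) auto
  then show ?thesis
    using assms by (simp only: sum.delta finite_atLeastAtMost) simp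
qed

definition supp_in :: "nat set \<Rightarrow> (nat \<Rightarrow> bit) set" where
  "supp_in A = {c. \<forall>i. c i \<noteq> 0 \<longrightarrow> i \<in> A}"

lemma zero_in_Wsp: "(\<lambda>_. 0) \<in> Wsp m"
  by (simp add: Wsp_def)

lemma Vsp_eq_supp_in: "Vsp m = supp_in {1..m}"
  by (simp add: Vsp_def supp_in_def)

lemma vadd_in_supp_in:
  assumes "c \<in> supp_in A" "c' \<in> supp_in A"
  shows "vadd c c' \<in> supp_in A"
proof (unfold supp_in_def, intro CollectI allI impI)
  fix i assume "vadd c c' i \<noteq> 0"
  then have "c i \<noteq> 0 \<or> c' i \<noteq> 0"
    by (auto simp: vadd_def)
  then show "i \<in> A"
    using assms by (auto simp: supp_in_def)
qed

lemma card_supp_in: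
  assumes "finite A"
  shows "card (supp_in A) = 2 ^ card A"
proof -
  have "bij_betw (\<lambda>c. {i. c i \<noteq> 0}) (supp_in A) (Pow A)"
  proof (rule bij_betwI[where g = "\<lambda>B i. if i \<in> B then 1 else 0"])
    show "(\<lambda>c. {i. c i \<noteq> 0}) \<in> supp_in A \<rightarrow> Pow A"
      by (auto simp: supp_in_def)
    show "(\<lambda>B i. if i \<in> B then 1 else 0) \<in> Pow A \<rightarrow> supp_in A"
      by (auto simp: supp_in_def split: if_splits)
  qed (auto simp: fun_eq_iff)
  then show ?thesis
    using card_Pow[of A] assms bij_betw_same_card by metis
qed

lemma finite_supp_in: "finite A \<Longrightarrow> finite (supp_in A)"
  using card_supp_in by (metis card.infinite power_not_zero zero_neq_numeral)

text \<open>f_m(x_i,x_j) = y_(j-i-1) with l \<le> i < j \<le> h forces 1 \<le> j-i-1 \<le> h-l-1.\<close>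

lemma fm_supp_in_vanish:
  assumes "a \<in> supp_in {l..h}" "c \<in> supp_in {l..h}" "\<not> (1 \<le> k \<and> k + l + 1 \<le> h)"
  shows "fm m a c k = 0"
  unfolding fm_def
proof (intro sum.neutral ballI)
  fix i j
  show "a i * c j * fbasis m i j k = 0"
  proof (cases "a i = 0 \<or> c j = 0")
    case False
    then have "i \<in> {l..h}" "j \<in> {l..h}"
      using assms(1,2) by (auto simp: supp_in_def)
    then show ?thesis
      using assms(3) by (auto simp: fbasis_def ybasis_def)
  qed auto
qed

lemma fm_supp_in_narrow:
  assumes "a \<in> supp_in {l..h}" "c \<in> supp_in {l..h}" "h \<le> l + 1"
  shows "fm m a c = (\<lambda>_. 0)"
  using fm_supp_in_vanish[OF assms(1,2)] assms(3) by auto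

lemma exists_commuting_supp_in_shorter:
  assumes a: "a \<in> supp_in {l..h}" and lh: "l + 2 \<le> h"
  shows "\<exists>d \<in> supp_in {l..h-1}. d \<noteq> (\<lambda>_. 0) \<and> fm m a d = fm m d a"
proof -
  define S where "S = supp_in {l..h-1}"
  define T where "T = supp_in {1..h-l-1}"
  define \<phi> where "\<phi> = (\<lambda>c. vadd (fm m a c) (fm m c a))"
  have S_sub: "S \<subseteq> supp_in {l..h}"
    by (auto simp: S_def supp_in_def)
  have "\<phi> c \<in> T" if c: "c \<in> S" for c
    unfolding T_def supp_in_def
  proof (intro CollectI allI impI)
    fix k assume "\<phi> c k \<noteq> 0"
    then have "fm m a c k \<noteq> 0 \<or> fm m c a k \<noteq> 0"
      by (auto simp: \<phi>_def vadd_def)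
    moreover have "c \<in> supp_in {l..h}"
      using c S_sub by blast
    ultimately have "1 \<le> k \<and> k + l + 1 \<le> h"
      using fm_supp_in_vanish a by blast
    then show "k \<in> {1..h-l-1}"
      by auto
  qed
  then have "\<phi> ` S \<subseteq> T"
    by blast
  moreover have "card T < card S"
    using lh card_supp_in[of "{1..h-l-1}"] card_supp_in[of "{l..h-1}"]
    by (simp add: S_def T_def)
  moreover have "finite T"
    by (simp add: T_def finite_supp_in)
  ultimately have "\<not> inj_on \<phi> S"
    using card_inj_on_le[of \<phi> S T] by linarith
  then obtain c c' where cc': "c \<in> S" "c' \<in> S" "c \<noteq> c'" "\<phi> c = \<phi> c'"
    unfolding inj_on_def by blast
  define d where "d = vadd c c'"
  have "d \<in> S"
    using cc' by (simp add: d_def S_def vadd_in_supp_in)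
  moreover have "d \<noteq> (\<lambda>_. 0)"
    using cc'(3) by (auto simp: d_def vadd_def fun_eq_iff bit_add_eq_0_iff)
  moreover have "\<phi> d = (\<lambda>_. 0)"
  proof -
    have "\<phi> d = vadd (\<phi> c) (\<phi> c')"
      unfolding \<phi>_def d_def fm_vadd_left fm_vadd_right by (simp add: vadd_def fun_eq_iff add_ac)
    then show ?thesis
      using cc'(4) by (simp add: vadd_def bit_add_eq_0_iff)
  qed
  then have "fm m a d = fm m d a"
    by (auto simp: \<phi>_def vadd_def fun_eq_iff bit_add_eq_0_iff)
  ultimately show ?thesis
    by (auto simp: S_def)
qed

text \<open>If a has a nonzero coordinate i \<ge> 3 it fails to commute with x_1 at y_(i-2);
  otherwise it fails to commute with x_m.\<close>

lemma exists_noncommuting: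
  assumes m: "m \<ge> 4" and a: "a \<in> Vsp m" and a_nz: "a \<noteq> (\<lambda>_. 0)"
  shows "\<exists>c \<in> Vsp m. fm m a c \<noteq> fm m c a"
proof (cases "\<exists>i\<ge>3. a i \<noteq> 0")
  case True
  then obtain i where i: "i \<ge> 3" "a i = 1" by auto
  have "i \<le> m" using a i by (auto simp: Vsp_def)
  have "fm m (ybasis 1) a (i - 2) = (\<Sum>j\<in>{1..m}. a j * fbasis m 1 j (i - 2))"
    using m by (intro fm_ybasis_left) simp
  also have "\<dots> = (\<Sum>j\<in>{1..m}. if j = i then a j else 0)"
    using i by (intro sum.cong) (auto simp: fbasis_def ybasis_def)
  also have "\<dots> = 1"
    using \<open>i \<le> m\<close> i by simp
  finally have "fm m (ybasis 1) a (i - 2) = 1" .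
  moreover have "fm m a (ybasis 1) (i - 2) = 0"
    using m by (simp add: fm_ybasis_right fbasis_def)
  moreover have "ybasis 1 \<in> Vsp m"
    using m by (auto simp: Vsp_def ybasis_def)
  ultimately show ?thesis by (metis zero_neq_one)
next
  case False
  then obtain p where p: "p \<in> {1, 2}" "a p = 1"
    using a_nz a by (auto simp: Vsp_def fun_eq_iff)
      (metis One_nat_def Suc_1 le_antisym not_less_eq_eq numeral_3_eq_3)
  have "fm m a (ybasis m) (m - p - 1) = (\<Sum>i\<in>{1..m}. a i * fbasis m i m (m - p - 1))"
    using m by (intro fm_ybasis_right) simp
  also have "\<dots> = (\<Sum>i\<in>{1..m}. if i = p then a i else 0)"
    using m p False by (intro sum.cong) (auto simp: fbasis_def ybasis_def)
  also have "\<dots> = 1"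
    using m p by auto
  finally have "fm m a (ybasis m) (m - p - 1) = 1" .
  moreover have "fm m (ybasis m) a (m - p - 1) = 0"
    using m by (simp add: fm_ybasis_left fbasis_def)
  moreover have "ybasis m \<in> Vsp m"
    using m by (auto simp: Vsp_def ybasis_def)
  ultimately show ?thesis by (metis zero_neq_one)
qed

lemma cg_vertices_Hgrp_iff:
  assumes m: "m \<ge> 4"
  shows "(a, b) \<in> cg_vertices (Hgrp m) \<longleftrightarrow> a \<in> Vsp m \<and> b \<in> Wsp m \<and> a \<noteq> (\<lambda>_. 0)"
proof -
  have "(a, b) \<in> grp_center (Hgrp m) \<longleftrightarrow> a \<in> Vsp m \<and> b \<in> Wsp m \<and> a = (\<lambda>_. 0)"
  proof
    assume center: "(a, b) \<in> grp_center (Hgrp m)"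
    then have ab: "a \<in> Vsp m" "b \<in> Wsp m"
      by (auto simp: grp_center_def Hgrp_carrier)
    moreover have "fm m a c = fm m c a" if "c \<in> Vsp m" for c
      using center that by (auto simp: grp_center_def Hgrp_carrier Wsp_def
          simp flip: Hgrp_commute_iff[of m a b c "\<lambda>_. 0"])
    ultimately show "a \<in> Vsp m \<and> b \<in> Wsp m \<and> a = (\<lambda>_. 0)"
      using exists_noncommuting[OF m] by blast
  qed (auto simp: grp_center_def Hgrp_carrier Hgrp_commute_iff fm_zero_left fm_zero_right)
  then show ?thesis
    by (auto simp: cg_vertices_def Hgrp_carrier)
qed

lemma symp_cg_adj: "symp (cg_adj G)"
  by (auto simp: symp_def cg_adj_def)

lemma cg_reach_via_commuting:
  assumes m: "m \<ge> 4"
    and a: "a \<in> Vsp m" "a \<noteq> (\<lambda>_. 0)" and b: "b \<in> Wsp m"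
    and c: "c \<in> Vsp m" "c \<noteq> (\<lambda>_. 0)"
    and commute: "fm m a c = fm m c a"
    and reach: "(cg_adj (Hgrp m))\<^sup>*\<^sup>* (c, \<lambda>_. 0) u"
  shows "(cg_adj (Hgrp m))\<^sup>*\<^sup>* (a, b) u"
proof (cases "(a, b) = (c, \<lambda>_. 0)")
  case False
  then have "cg_adj (Hgrp m) (a, b) (c, \<lambda>_. 0)"
    using a b c commute zero_in_Wsp
    by (simp add: cg_adj_def cg_vertices_Hgrp_iff[OF m] Hgrp_commute_iff)
  then show ?thesis
    using reach by (rule converse_rtranclp_into_rtranclp)
qed (use reach in simp)

lemma cg_reach_x1:
  assumes m: "m \<ge> 4"
  shows "a \<in> supp_in {1..h} \<Longrightarrow> h \<le> m \<Longrightarrow> a \<noteq> (\<lambda>_. 0)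
    \<Longrightarrow> (cg_adj (Hgrp m))\<^sup>*\<^sup>* (a, \<lambda>_. 0) (ybasis 1, \<lambda>_. 0)"
proof (induction h arbitrary: a)
  case 0
  then show ?case by (auto simp: supp_in_def fun_eq_iff)
next
  case (Suc h)
  have a_V: "a \<in> Vsp m"
    using Suc.prems by (auto simp: Vsp_eq_supp_in supp_in_def)
  show ?case
  proof (cases "Suc h \<le> 2")
    case True
    have "ybasis 1 \<in> supp_in {1..Suc h}"
      by (simp add: supp_in_def ybasis_def)
    then have "fm m a (ybasis 1) = fm m (ybasis 1) a"
      using fm_supp_in_narrow[OF Suc.prems(1)] fm_supp_in_narrow[OF _ Suc.prems(1)] True
      by simp
    moreover have "ybasis 1 \<in> Vsp m" "ybasis 1 \<noteq> (\<lambda>_. 0)"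
      using m by (auto simp: Vsp_def ybasis_def fun_eq_iff)
    ultimately show ?thesis
      using cg_reach_via_commuting[OF m a_V Suc.prems(3) zero_in_Wsp] by blast
  next
    case False
    then obtain d where d: "d \<in> supp_in {1..h}" "d \<noteq> (\<lambda>_. 0)" "fm m a d = fm m d a"
      using exists_commuting_supp_in_shorter[OF Suc.prems(1)] by auto
    moreover have "d \<in> Vsp m"
      using d(1) Suc.prems(2) by (auto simp: Vsp_eq_supp_in supp_in_def)
    moreover have "(cg_adj (Hgrp m))\<^sup>*\<^sup>* (d, \<lambda>_. 0) (ybasis 1, \<lambda>_. 0)"
      using Suc.IH d(1,2) Suc.prems(2) by simp
    ultimately show ?thesis
      using cg_reach_via_commuting[OF m a_V Suc.prems(3) zero_in_Wsp] by blast
  qed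
qed

theorem lemma2p2:
  fixes m :: nat
  assumes "m \<ge> 4"
  shows "graph_connected (cg_vertices (Hgrp m)) (cg_adj (Hgrp m))"
proof -
  let ?x1 = "(ybasis 1, \<lambda>_. 0 :: bit)"
  have reach_x1: "(cg_adj (Hgrp m))\<^sup>*\<^sup>* u ?x1" if "u \<in> cg_vertices (Hgrp m)" for u
  proof -
    obtain a b where u: "u = (a, b)"
      by fastforce
    then have a: "a \<in> Vsp m" "a \<noteq> (\<lambda>_. 0)" and b: "b \<in> Wsp m"
      using that cg_vertices_Hgrp_iff[OF assms] by auto
    have "(cg_adj (Hgrp m))\<^sup>*\<^sup>* (a, \<lambda>_. 0) ?x1"
      using cg_reach_x1[OF assms, of a m] a by (simp add: Vsp_eq_supp_in)
    then show ?thesis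
      unfolding u using cg_reach_via_commuting[OF assms a b a] by blast
  qed
  have "?x1 \<in> cg_vertices (Hgrp m)"
    using assms zero_in_Wsp by (auto simp: cg_vertices_Hgrp_iff Vsp_def ybasis_def fun_eq_iff)
  moreover have "(cg_adj (Hgrp m))\<^sup>*\<^sup>* u v"
    if "u \<in> cg_vertices (Hgrp m)" "v \<in> cg_vertices (Hgrp m)" for u v
    using reach_x1[OF that(1)] symp_rtranclp[OF symp_cg_adj] reach_x1[OF that(2)]
    by (meson rtranclp_trans sympD)
  ultimately show ?thesis
    unfolding graph_connected_def by blast
qed

end
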